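(* Let $n\ge0$ and $\tau\in Y_n$. Then $\tau$ splits if and only if $\tau\in Y^{be}\cup Y^{bo}$. In particular, for $n\ge0$, $$\varphi(Y^{be}_{2n})=\{P\in\mathrm{NCP}_{2n}: P=Q_1\cup Q_2\text{ for some }Q_1,Q_2\in\mathrm{NCP}_n\}.$$
   Context: Planar binary trees: $Y_0=\{|\}$, $Y_n=\{\sigma\vee\tau:\sigma\in Y_k,\tau\in Y_l,k+l=n-1\}$ ($\sigma\vee\tau$: root with left subtree $\sigma$, right subtree $\tau$). The internal vertices of $\tau\in Y_n$ are numbered $1,\dots,n$ in left-to-right order (recursively: vertices of left subtree, root, vertices of right subtree). A right arm of $\tau$ is a class of the equivalence relation on vertices generated by "$x$ is the right child of $y$". $\tau$ splits if every right arm consists of numbers of the same parity. $Y^{be}$ and $Y^{bo}$ are defined jointly recursively by $Y^{be}=\{|\}\cup\{\sigma\vee\rho:\sigma\in Y^{bo},\rho\in Y^{be}\}$ and $Y^{bo}=\{\sigma\vee\rho:\sigma,\rho\in Y^{be}\}$; all trees in $Y^{be}$ have an even number of vertices and those in $Y^{bo}$ an odd number; $Y^{be}_{2n}$ is the set of elements of $Y^{be}$ with $2n$ vertices. $\mathrm{NCP}_n$: noncrossing partitions of $[n]$. For partitions $Q_1,Q_2$ of $[n]$, $Q_1\cup Q_2$ is the partition of $[2n]$ with blocks $\{2i-1:i\in V\}$ ($V\in Q_1$) and $\{2i:i\in W\}$ ($W\in Q_2$). $\varphi:Y\to\mathrm{NCP}$ sends $\tau\in Y_n$ to the partition of $[n]$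 whose blocks are the right arms of $\tau$ (equivalently $\varphi(|)=\emptyset$, $\varphi(\sigma\vee\tau)=\varphi(\sigma)*(|\,\underline*\,\varphi(\tau))$, with $*$ concatenation and $\underline*$ concatenation followed by merging the blocks containing the last elements of each part). *)

theory Defs
  imports Main "HOL-Library.Disjoint_Sets"
begin

text \<open>Planar binary trees: Leaf is the trivial tree |, Node s t is s \<or> t.\<close>
datatype ptree = Leaf | Node ptree ptree

text \<open>Number of internal vertices (tau \<in> Y_n iff tsize tau = n).\<close>
fun tsize :: "ptree \<Rightarrow> nat" where
  "tsize Leaf = 0"
| "tsize (Node s t) = tsize s + 1 + tsize t"

text \<open>Vertices are numbered 1..n in left-to-right (in-order) order: left subtree
  vertices 1..k, root k+1, right subtree vertices shifted by k+1.
  rchild tau is the set of pairs (x,y) with x the right child of y.\<close>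
fun rchild :: "ptree \<Rightarrow> (nat \<times> nat) set" where
  "rchild Leaf = {}"
| "rchild (Node s t) =
     rchild s
     \<union> (\<lambda>(x,y). (x + tsize s + 1, y + tsize s + 1)) ` rchild t
     \<union> (case t of Leaf \<Rightarrow> {}
         | Node t1 t2 \<Rightarrow> {(tsize s + 1 + (tsize t1 + 1), tsize s + 1)})"

definition right_arms :: "ptree \<Rightarrow> nat set set" where
  "right_arms tau = {1..tsize tau} // ((rchild tau \<union> (rchild tau)\<inverse>)\<^sup>*)"

definition phi :: "ptree \<Rightarrow> nat set set" where
  "phi tau = right_arms tau"

definition splits :: "ptree \<Rightarrow> bool" where
  "splits tau \<longleftrightarrow> (\<forall>B \<in> right_arms tau. \<forall>x\<in>B. \<forall>y\<in>B. even x = even y)"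

inductive Ybe :: "ptree \<Rightarrow> bool" and Ybo :: "ptree \<Rightarrow> bool" where
  be_leaf: "Ybe Leaf"
| be_node: "Ybo s \<Longrightarrow> Ybe r \<Longrightarrow> Ybe (Node s r)"
| bo_node: "Ybe s \<Longrightarrow> Ybe r \<Longrightarrow> Ybo (Node s r)"

definition noncrossing :: "nat set set \<Rightarrow> bool" where
  "noncrossing P \<longleftrightarrow> (\<forall>B1\<in>P. \<forall>B2\<in>P. \<forall>a b c d. B1 \<noteq> B2 \<longrightarrow> a < b \<longrightarrow> b < c \<longrightarrow> c < d
      \<longrightarrow> a \<in> B1 \<longrightarrow> c \<in> B1 \<longrightarrow> b \<in> B2 \<longrightarrow> d \<in> B2 \<longrightarrow> False)"

definition NCP :: "nat \<Rightarrow> nat set set set" where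
  "NCP n = {P. partition_on {1..n} P \<and> noncrossing P}"

definition ncp_union :: "nat set set \<Rightarrow> nat set set \<Rightarrow> nat set set" where
  "ncp_union Q1 Q2 = (\<lambda>V. (\<lambda>i. 2*i - 1) ` V) ` Q1 \<union> (\<lambda>W. (\<lambda>i. 2*i) ` W) ` Q2"

end

theory Submission
  imports Defs
begin

text \<open>Let the top of a vertex be the smallest vertex of its right arm. On \<open>Node s t\<close> with
  \<open>k = tsize s\<close>, the vertices of \<open>s\<close> keep their tops, the root \<open>k + 1\<close> absorbs the right arm of
  the root of \<open>t\<close>, and all other tops of \<open>t\<close> are shifted by \<open>k + 1\<close>. A tree splits iff every
  vertex has the parity of its top, so \<open>Node s t\<close> splits iff \<open>s\<close> and \<open>t\<close> split and the root of
  \<open>t\<close> is even, i.e. the left subtree of \<open>t\<close> has odd size; by induction this is the recursion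
  defining \<open>Ybe\<close> and \<open>Ybo\<close>.

  Right arms never cross, and every noncrossing partition of \<open>[m]\<close> arises: the least element
  \<open>j\<close> of the block of \<open>m\<close> becomes the root, \<open>[1, j - 1]\<close> is a union of blocks realised by the
  left subtree, and the shifted rest by the right subtree, the block of \<open>m\<close> becoming its root
  arm. Hence \<open>phi\<close> maps the split trees with \<open>2n\<close> vertices onto the noncrossing partitions of
  \<open>[2n]\<close> whose blocks have constant parity, which are exactly the unions of a noncrossing
  partition of the odd and one of the even positions.\<close>

text \<open>\<open>root_index Leaf = 0\<close> is a junk value that is never a vertex.\<close>

fun root_index :: "ptree \<Rightarrow> nat" where
  "root_index Leaf = 0"
| "root_index (Node s t) = tsize s + 1"

fun arm_top :: "ptree \<Rightarrow> nat \<Rightarrow> nat" where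
  "arm_top Leaf x = x"
| "arm_top (Node s t) x =
     (if x \<le> tsize s then arm_top s x
      else if x = tsize s + 1 \<or> arm_top t (x - (tsize s + 1)) = root_index t then tsize s + 1
      else arm_top t (x - (tsize s + 1)) + tsize s + 1)"

lemma arm_top_bounds: "x \<in> {1..tsize tau} \<Longrightarrow> 1 \<le> arm_top tau x \<and> arm_top tau x \<le> x"
proof (induction tau arbitrary: x)
  case (Node s t)
  show ?case
  proof (cases "x \<le> tsize s \<or> x = tsize s + 1")
    case False
    then have "x - tsize s - 1 \<in> {1..tsize t}" using Node.prems by auto
    from Node.IH(2)[OF this] show ?thesis using False by auto
  qed (use Node in auto)
qed simp

lemma root_index_in_range: "t \<noteq> Leaf \<Longrightarrow> root_index t \<in> {1..tsize t}"
  by (cases t) auto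

lemma arm_top_root_index: "arm_top t (root_index t) = root_index t"
  by (cases t) auto

lemma arm_top_last: "t \<noteq> Leaf \<Longrightarrow> arm_top t (tsize t) = root_index t"
proof (induction t)
  case (Node s t)
  then show ?case by (cases "t = Leaf") auto
qed simp

lemma arm_top_Node_left [simp]: "x \<le> tsize s \<Longrightarrow> arm_top (Node s t) x = arm_top s x"
  by simp

\<comment> \<open>stated in simp normal form, where \<open>tsize s + 1\<close> has become \<open>Suc (tsize s)\<close>\<close>
lemma arm_top_Node_root [simp]: "arm_top (Node s t) (Suc (tsize s)) = Suc (tsize s)"
  by simp

declare arm_top.simps(2) [simp del]

lemma Node_index_cases:
  assumes "x \<in> {1..tsize (Node s t)}"
  obtains (left) "x \<in> {1..tsize s}" | (root) "x = tsize s + 1"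
    | (right) x' where "x' \<in> {1..tsize t}" "x = x' + tsize s + 1"
proof -
  consider "x \<le> tsize s" | "x = tsize s + 1" | "tsize s + 1 < x" by linarith
  then show thesis
  proof cases
    case 3
    then show thesis using assms by (intro right[of "x - tsize s - 1"]) auto
  qed (use assms left root in auto)
qed

lemma arm_top_Node_left_less_right:
  "x \<in> {1..tsize s} \<Longrightarrow> tsize s < y \<Longrightarrow> arm_top (Node s t) x < arm_top (Node s t) y"
  using arm_top_bounds[of x s] by (auto simp: arm_top.simps(2))

lemma arm_top_Node_right_eq_root:
  "x \<in> {1..tsize t} \<Longrightarrow>
    arm_top (Node s t) (x + tsize s + 1) = tsize s + 1 \<longleftrightarrow> arm_top t x = root_index t"
  using arm_top_bounds[of x t] by (auto simp: arm_top.simps(2))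

lemma arm_top_Node_right_eq_iff:
  "x \<in> {1..tsize t} \<Longrightarrow> y \<in> {1..tsize t} \<Longrightarrow>
    arm_top (Node s t) (x + tsize s + 1) = arm_top (Node s t) (y + tsize s + 1)
      \<longleftrightarrow> arm_top t x = arm_top t y"
  using arm_top_bounds[of x t] arm_top_bounds[of y t] by (auto simp: arm_top.simps(2))

lemma arm_top_idem: "x \<in> {1..tsize tau} \<Longrightarrow> arm_top tau (arm_top tau x) = arm_top tau x"
proof (induction tau arbitrary: x)
  case (Node s t)
  from Node.prems show ?case
  proof (cases rule: Node_index_cases)
    case left
    then show ?thesis using Node.IH(1) arm_top_bounds[of x s] by simp
  next
    case (right x')
    show ?thesis
    proof (cases "arm_top t x' = root_index t")
      case False
      have "arm_top t x' \<in> {1..tsize t}" using arm_top_bounds[OF right(1)] right(1) by auto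
      then show ?thesis using right False Node.IH(2)[OF right(1)] by (simp add: arm_top.simps(2))
    qed (use right in \<open>simp add: arm_top.simps(2)\<close>)
  qed (simp_all add: arm_top.simps(2))
qed simp

lemma rtrancl_map:
  assumes "(a, b) \<in> R\<^sup>*" and "\<And>u v. (u, v) \<in> R \<Longrightarrow> (f u, f v) \<in> S"
  shows "(f a, f b) \<in> S\<^sup>*"
  using assms(1) by induction (auto intro: rtrancl_into_rtrancl assms(2))

lemma rchild_same_arm_top:
  "(x, y) \<in> rchild tau \<Longrightarrow>
    x \<in> {1..tsize tau} \<and> y \<in> {1..tsize tau} \<and> arm_top tau x = arm_top tau y"
proof (induction tau arbitrary: x y)
  case (Node s t)
  consider (left) "(x, y) \<in> rchild s"
    | (right) x' y' where "(x', y') \<in> rchild t" "x = x' + tsize s + 1" "y = y' + tsize s + 1"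
    | (root) "t \<noteq> Leaf" "x = root_index t + tsize s + 1" "y = tsize s + 1"
  proof -
    have "(x, y) \<in> rchild s \<or> (\<exists>(x', y') \<in> rchild t. x = x' + tsize s + 1 \<and> y = y' + tsize s + 1)
      \<or> (t \<noteq> Leaf \<and> x = root_index t + tsize s + 1 \<and> y = tsize s + 1)"
      using Node.prems by (cases t) auto
    then show thesis using that by blast
  qed
  then show ?case
  proof cases
    case left
    then show ?thesis using Node.IH(1)[OF left] by auto
  next
    case right
    then show ?thesis using Node.IH(2)[OF right(1)] arm_top_Node_right_eq_iff by auto
  next
    case root
    then show ?thesis
      using root_index_in_range[OF root(1)] by (auto simp: arm_top.simps(2) arm_top_root_index)
  qed
qed simp

lemma arm_top_path: "x \<in> {1..tsize tau} \<Longrightarrow> (x, arm_top tau x) \<in> (rchild tau)\<^sup>*"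
proof (induction tau arbitrary: x)
  case (Node s t)
  from Node.prems show ?case
  proof (cases rule: Node_index_cases)
    case left
    have "rchild s \<subseteq> rchild (Node s t)" by auto
    then have "(rchild s)\<^sup>* \<subseteq> (rchild (Node s t))\<^sup>*" by (rule rtrancl_mono)
    then show ?thesis using Node.IH(1)[OF left] left by auto
  next
    case (right x')
    let ?shift = "\<lambda>u. u + tsize s + 1"
    have "(?shift x', ?shift (arm_top t x')) \<in> (rchild (Node s t))\<^sup>*"
      by (rule rtrancl_map[OF Node.IH(2)[OF right(1)]]) auto
    then have path: "(x, ?shift (arm_top t x')) \<in> (rchild (Node s t))\<^sup>*"
      using right(2) by simp
    have top: "arm_top (Node s t) x =
        (if arm_top t x' = root_index t then tsize s + 1 else ?shift (arm_top t x'))"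
      using right by (simp add: arm_top.simps(2))
    show ?thesis
    proof (cases "arm_top t x' = root_index t")
      case True
      then have "(?shift (arm_top t x'), tsize s + 1) \<in> rchild (Node s t)"
        using right(1) by (cases t) auto
      then show ?thesis using path True top by (simp add: rtrancl_into_rtrancl)
    qed (use path top in simp)
  qed (simp add: arm_top.simps(2))
qed simp

definition same_arm :: "ptree \<Rightarrow> (nat \<times> nat) set" where
  "same_arm tau =
     {(x, y). x \<in> {1..tsize tau} \<and> y \<in> {1..tsize tau} \<and> arm_top tau x = arm_top tau y}"

lemma right_arm_class:
  assumes x: "x \<in> {1..tsize tau}"
  shows "(rchild tau \<union> (rchild tau)\<inverse>)\<^sup>* `` {x} = same_arm tau `` {x}"
proof (intro equalityI subsetI)
  fix y assume "y \<in> (rchild tau \<union> (rchild tau)\<inverse>)\<^sup>* `` {x}"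
  then have "(x, y) \<in> (rchild tau \<union> (rchild tau)\<inverse>)\<^sup>*" by simp
  then show "y \<in> same_arm tau `` {x}"
    by induction (use x rchild_same_arm_top in \<open>auto simp: same_arm_def\<close>)
next
  let ?R = "rchild tau \<union> (rchild tau)\<inverse>"
  fix y assume "y \<in> same_arm tau `` {x}"
  then have y: "y \<in> {1..tsize tau}" and top: "arm_top tau y = arm_top tau x"
    by (auto simp: same_arm_def)
  have "(x, arm_top tau x) \<in> ?R\<^sup>*"
    using arm_top_path[OF x] rtrancl_mono[of "rchild tau" ?R] by blast
  moreover have "(arm_top tau y, y) \<in> ?R\<^sup>*"
    using rtrancl_converseI[OF arm_top_path[OF y]] rtrancl_mono[of "(rchild tau)\<inverse>" ?R] by blast
  ultimately show "y \<in> ?R\<^sup>* `` {x}" using top by (auto intro: rtrancl_trans)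
qed

lemma right_arms_eq_quotient: "right_arms tau = {1..tsize tau} // same_arm tau"
  unfolding right_arms_def quotient_def using right_arm_class by simp

lemma equiv_same_arm: "equiv {1..tsize tau} (same_arm tau)"
  by (auto simp: equiv_def refl_on_def sym_def trans_def same_arm_def)

lemma partition_on_phi: "partition_on {1..tsize tau} (phi tau)"
  unfolding phi_def right_arms_eq_quotient by (rule partition_on_quotient[OF equiv_same_arm])

lemma splits_iff_arm_top_parity:
  "splits tau \<longleftrightarrow> (\<forall>x\<in>{1..tsize tau}. even (arm_top tau x) = even x)"
proof
  assume splits: "splits tau"
  show "\<forall>x\<in>{1..tsize tau}. even (arm_top tau x) = even x"
  proof
    fix x assume x: "x \<in> {1..tsize tau}"
    have "arm_top tau x \<in> {1..tsize tau}" using arm_top_bounds[OF x] x by auto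
    then have "{x, arm_top tau x} \<subseteq> same_arm tau `` {x}"
      using x arm_top_idem[OF x] by (auto simp: same_arm_def)
    moreover have "same_arm tau `` {x} \<in> right_arms tau"
      unfolding right_arms_eq_quotient using x by (rule quotientI)
    ultimately show "even (arm_top tau x) = even x"
      using splits unfolding splits_def by blast
  qed
next
  assume parity: "\<forall>x\<in>{1..tsize tau}. even (arm_top tau x) = even x"
  show "splits tau"
    unfolding splits_def right_arms_eq_quotient
  proof (intro ballI)
    fix B x y assume "B \<in> {1..tsize tau} // same_arm tau" "x \<in> B" "y \<in> B"
    then obtain z where "(z, x) \<in> same_arm tau" "(z, y) \<in> same_arm tau"
      by (auto elim!: quotientE)
    then have "x \<in> {1..tsize tau}" "y \<in> {1..tsize tau}" "arm_top tau x = arm_top tau y"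
      by (auto simp: same_arm_def)
    then show "even x = even y" using parity by metis
  qed
qed

text \<open>In \<open>Node s t\<close> the root arm of \<open>t\<close> hangs below the root \<open>tsize s + 1\<close>, so its vertices
  must be even in \<open>t\<close>, while the other arms of \<open>t\<close> are just shifted.\<close>

lemma splits_Node_iff_right_subtree:
  "splits (Node s t) \<longleftrightarrow> splits s \<and>
     (\<forall>x\<in>{1..tsize t}. even (if arm_top t x = root_index t then 0 else arm_top t x) = even x)"
proof -
  let ?top = "arm_top (Node s t)" and ?k = "tsize s"
  let ?right = "\<lambda>x. even (if arm_top t x = root_index t then 0 else arm_top t x) = even x"
  have root: "even (?top (?k + 1)) = even (?k + 1)"
    by (simp add: arm_top.simps(2))
  have right_parity: "even (?top (x + ?k + 1)) = even (x + ?k + 1) \<longleftrightarrow> ?right x"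
    if "x \<in> {1..tsize t}" for x
    using that by (simp add: arm_top.simps(2)) argo
  show ?thesis
    unfolding splits_iff_arm_top_parity
  proof (rule iffI)
    assume parity: "\<forall>y\<in>{1..tsize (Node s t)}. even (?top y) = even y"
    show "(\<forall>x\<in>{1..tsize s}. even (arm_top s x) = even x) \<and> (\<forall>x\<in>{1..tsize t}. ?right x)"
    proof (intro conjI ballI)
      fix x assume x: "x \<in> {1..tsize s}"
      then have "x \<in> {1..tsize (Node s t)}" by simp
      from bspec[OF parity this] show "even (arm_top s x) = even x" using x by simp
    next
      fix x assume x: "x \<in> {1..tsize t}"
      then have "x + ?k + 1 \<in> {1..tsize (Node s t)}" by simp
      from bspec[OF parity this] show "?right x" using right_parity[OF x] by blast
    qed
  next
    assume parity: "(\<forall>y\<in>{1..tsize s}. even (arm_top s y) = even y) \<and>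
        (\<forall>y\<in>{1..tsize t}. ?right y)"
    show "\<forall>x\<in>{1..tsize (Node s t)}. even (?top x) = even x"
    proof
      fix x assume "x \<in> {1..tsize (Node s t)}"
      then show "even (?top x) = even x"
      proof (cases rule: Node_index_cases)
        case left
        then show ?thesis using parity by simp
      next
        case (right x')
        then have "?right x'" using parity by blast
        then show ?thesis using right_parity[OF right(1)] right(2) by simp
      qed (use root in simp)
    qed
  qed
qed

lemma splits_iff_root_arm_detached:
  "(\<forall>x\<in>{1..tsize t}. even (if arm_top t x = root_index t then 0 else arm_top t x) = even x)
    \<longleftrightarrow> splits t \<and> (t \<noteq> Leaf \<longrightarrow> even (root_index t))"
  unfolding splits_iff_arm_top_parity
proof
  assume detached: "\<forall>x\<in>{1..tsize t}. even (if arm_top t x = root_index t then 0 else arm_top t x) = even x"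
  have root_even: "even (root_index t)" if "t \<noteq> Leaf"
    using bspec[OF detached root_index_in_range[OF that]] arm_top_root_index[of t] by simp
  have "even (arm_top t x) = even x" if x: "x \<in> {1..tsize t}" for x
  proof (cases "arm_top t x = root_index t")
    case True
    moreover have "t \<noteq> Leaf" using x by auto
    ultimately show ?thesis using bspec[OF detached x] root_even by simp
  qed (use bspec[OF detached x] in simp)
  then show "(\<forall>x\<in>{1..tsize t}. even (arm_top t x) = even x) \<and> (t \<noteq> Leaf \<longrightarrow> even (root_index t))"
    using root_even by blast
next
  assume "(\<forall>x\<in>{1..tsize t}. even (arm_top t x) = even x) \<and> (t \<noteq> Leaf \<longrightarrow> even (root_index t))"
  then have parity: "\<forall>x\<in>{1..tsize t}. even (arm_top t x) = even x"
    and root_even: "t \<noteq> Leaf \<Longrightarrow> even (root_index t)"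
    by blast+
  show "\<forall>x\<in>{1..tsize t}. even (if arm_top t x = root_index t then 0 else arm_top t x) = even x"
  proof
    fix x assume x: "x \<in> {1..tsize t}"
    then have "t \<noteq> Leaf" by auto
    then show "even (if arm_top t x = root_index t then 0 else arm_top t x) = even x"
      using bspec[OF parity x] root_even by (cases "arm_top t x = root_index t") simp_all
  qed
qed

lemma splits_Node:
  "splits (Node s t) \<longleftrightarrow> splits s \<and> splits t \<and> (t \<noteq> Leaf \<longrightarrow> even (root_index t))"
  using splits_Node_iff_right_subtree splits_iff_root_arm_detached by blast

inductive_simps Ybe_Leaf: "Ybe Leaf"
inductive_simps Ybo_Leaf: "Ybo Leaf"
inductive_simps Ybe_Node: "Ybe (Node s t)"
inductive_simps Ybo_Node: "Ybo (Node s t)"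

lemma Ybe_even_Ybo_odd: "(Ybe t \<longrightarrow> even (tsize t)) \<and> (Ybo t \<longrightarrow> odd (tsize t))"
  by (induction t) (auto simp: Ybe_Node Ybo_Node Ybo_Leaf)

lemma splits_iff_Ybe_Ybo_root:
  "(splits t \<longleftrightarrow> Ybe t \<or> Ybo t) \<and> (Ybe t \<longleftrightarrow> t = Leaf \<or> splits t \<and> even (root_index t))"
proof (induction t)
  case Leaf
  have "splits Leaf" by (simp add: splits_iff_arm_top_parity)
  then show ?case by (simp add: Ybe_Leaf Ybo_Leaf)
next
  case (Node s t)
  have Ybo_s: "Ybo s \<longleftrightarrow> (Ybe s \<or> Ybo s) \<and> odd (tsize s)"
    using Ybe_even_Ybo_odd[of s] by blast
  have "splits (Node s t) \<longleftrightarrow> (Ybe s \<or> Ybo s) \<and> Ybe t"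
    using Node.IH unfolding splits_Node by blast
  then show ?case
    using Ybo_s by (simp add: Ybe_Node Ybo_Node) blast
qed

lemma splits_iff_Ybe_or_Ybo: "splits t \<longleftrightarrow> Ybe t \<or> Ybo t"
  using splits_iff_Ybe_Ybo_root by blast

lemma Ybe_iff_splits_even: "Ybe t \<longleftrightarrow> splits t \<and> even (tsize t)"
  using splits_iff_Ybe_or_Ybo Ybe_even_Ybo_odd by blast

lemma arm_top_noncrossing_Node_right:
  assumes IH: "\<And>a b c d. 1 \<le> a \<Longrightarrow> a < b \<Longrightarrow> b < c \<Longrightarrow> c < d \<Longrightarrow> d \<le> tsize t \<Longrightarrow>
      arm_top t a = arm_top t c \<Longrightarrow> arm_top t b = arm_top t d \<Longrightarrow> arm_top t a = arm_top t b"
    and order: "tsize s < a" "a < b" "b < c" "c < d" "d \<le> tsize (Node s t)"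
    and ac: "arm_top (Node s t) a = arm_top (Node s t) c"
    and bd: "arm_top (Node s t) b = arm_top (Node s t) d"
  shows "arm_top (Node s t) a = arm_top (Node s t) b"
proof -
  let ?k = "tsize s"
  define b' c' d' where "b' = b - ?k - 1" and "c' = c - ?k - 1" and "d' = d - ?k - 1"
  have bcd: "b' \<in> {1..tsize t}" "c' \<in> {1..tsize t}" "d' \<in> {1..tsize t}" "b' < c'" "c' < d'"
    "b = b' + ?k + 1" "c = c' + ?k + 1" "d = d' + ?k + 1"
    using order unfolding b'_def c'_def d'_def by auto
  have bd': "arm_top t b' = arm_top t d'"
    using bd arm_top_Node_right_eq_iff[OF bcd(1,3)] bcd by simp
  show ?thesis
  proof (cases "a = ?k + 1")
    case True
    then have "arm_top (Node s t) (c' + ?k + 1) = ?k + 1"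
      using ac bcd by simp
    then have c: "arm_top t c' = root_index t"
      using arm_top_Node_right_eq_root[OF bcd(2)] by blast
    have last: "arm_top t (tsize t) = root_index t"
      using bcd by (intro arm_top_last) auto
    \<comment> \<open>the root arm of \<open>t\<close> contains \<open>c'\<close> and the last vertex, so noncrossing pulls \<open>b'\<close> into it\<close>
    have "arm_top t b' = root_index t"
    proof (cases "d' = tsize t")
      case False
      then show ?thesis
        using IH[of b' c' d' "tsize t"] bcd bd' c last by fastforce
    qed (use bd' last in simp)
    then show ?thesis using True arm_top_Node_right_eq_root[OF bcd(1)] bcd by simp
  next
    case False
    define a' where "a' = a - ?k - 1"
    have a': "a' \<in> {1..tsize t}" "a' < b'" "a = a' + ?k + 1"
      using order False bcd unfolding a'_def by auto
    have "arm_top t a' = arm_top t c'"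
      using ac arm_top_Node_right_eq_iff[OF a'(1) bcd(2)] a' bcd by simp
    then have "arm_top t a' = arm_top t b'" using IH[of a' b' c' d'] a' bcd bd' by simp
    then show ?thesis using arm_top_Node_right_eq_iff[OF a'(1) bcd(1)] a' bcd by simp
  qed
qed

lemma arm_top_noncrossing:
  assumes "1 \<le> a" "a < b" "b < c" "c < d" "d \<le> tsize tau"
    and "arm_top tau a = arm_top tau c" "arm_top tau b = arm_top tau d"
  shows "arm_top tau a = arm_top tau b"
  using assms
proof (induction tau arbitrary: a b c d)
  case (Node s t)
  show ?case
  proof (cases "d \<le> tsize s")
    case True
    then show ?thesis using Node.IH(1)[of a b c d] Node.prems by simp
  next
    case d: False
    show ?thesis
    proof (cases "a \<le> tsize s")
      case True
      then show ?thesis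
        using d Node.prems arm_top_Node_left_less_right[of a s c t]
          arm_top_Node_left_less_right[of b s d t]
        by (cases "c \<le> tsize s") auto
    next
      case False
      then have "tsize s < a" by simp
      from Node.IH(2) this Node.prems(2-7) show ?thesis
        by (rule arm_top_noncrossing_Node_right)
    qed
  qed
qed simp

lemma noncrossing_phi: "noncrossing (phi tau)"
  unfolding noncrossing_def phi_def right_arms_eq_quotient
proof (intro ballI allI impI)
  fix B1 B2 a b c d
  assume B: "B1 \<in> {1..tsize tau} // same_arm tau" "B2 \<in> {1..tsize tau} // same_arm tau" "B1 \<noteq> B2"
    and order: "a < b" "b < c" "c < d" and mem: "a \<in> B1" "c \<in> B1" "b \<in> B2" "d \<in> B2"
  have "(a, c) \<in> same_arm tau" "(b, d) \<in> same_arm tau"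
    using B(1,2) mem by (auto elim!: quotientE simp: same_arm_def)
  then have "(a, b) \<in> same_arm tau"
    using arm_top_noncrossing[OF _ order] by (auto simp: same_arm_def)
  then show False
    using B mem quotient_eq_iff[OF equiv_same_arm] by blast
qed

lemma phi_in_NCP: "phi tau \<in> NCP (tsize tau)"
  unfolding NCP_def using partition_on_phi noncrossing_phi by blast

text \<open>Noncrossing partitions are handled through their equivalence relations, given as predicates,
  because restricting to an initial segment or shifting is then immediate.\<close>

definition noncrossing_equiv :: "nat \<Rightarrow> (nat \<Rightarrow> nat \<Rightarrow> bool) \<Rightarrow> bool" where
  "noncrossing_equiv m e \<longleftrightarrow>
     (\<forall>x\<in>{1..m}. e x x) \<and>
     (\<forall>x\<in>{1..m}. \<forall>y\<in>{1..m}. e x y \<longrightarrow> e y x) \<and>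
     (\<forall>x\<in>{1..m}. \<forall>y\<in>{1..m}. \<forall>z\<in>{1..m}. e x y \<longrightarrow> e y z \<longrightarrow> e x z) \<and>
     (\<forall>a b c d. 1 \<le> a \<longrightarrow> a < b \<longrightarrow> b < c \<longrightarrow> c < d \<longrightarrow> d \<le> m \<longrightarrow> e a c \<longrightarrow> e b d \<longrightarrow> e a b)"

lemma noncrossing_equivD:
  assumes "noncrossing_equiv m e"
  shows noncrossing_equiv_refl: "x \<in> {1..m} \<Longrightarrow> e x x"
    and noncrossing_equiv_sym: "x \<in> {1..m} \<Longrightarrow> y \<in> {1..m} \<Longrightarrow> e x y \<Longrightarrow> e y x"
    and noncrossing_equiv_trans:
      "x \<in> {1..m} \<Longrightarrow> y \<in> {1..m} \<Longrightarrow> z \<in> {1..m} \<Longrightarrow> e x y \<Longrightarrow> e y z \<Longrightarrow> e x z"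
    and noncrossing_equiv_noncrossing:
      "1 \<le> a \<Longrightarrow> a < b \<Longrightarrow> b < c \<Longrightarrow> c < d \<Longrightarrow> d \<le> m \<Longrightarrow> e a c \<Longrightarrow> e b d \<Longrightarrow> e a b"
  using assms unfolding noncrossing_equiv_def by blast+

lemma noncrossing_equiv_mono: "noncrossing_equiv m e \<Longrightarrow> k \<le> m \<Longrightarrow> noncrossing_equiv k e"
  unfolding noncrossing_equiv_def by (meson atLeastAtMost_iff le_trans)

lemma noncrossing_equiv_shift:
  assumes e: "noncrossing_equiv m e"
  shows "noncrossing_equiv (m - j) (\<lambda>x y. e (x + j) (y + j))"
proof -
  have shift: "x + j \<in> {1..m}" if "x \<in> {1..m - j}" for x
    using that by auto
  show ?thesis
    unfolding noncrossing_equiv_def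
  proof (intro conjI ballI allI impI)
    fix x assume "x \<in> {1..m - j}"
    then show "e (x + j) (x + j)" using noncrossing_equiv_refl[OF e] shift by blast
  next
    fix x y assume "x \<in> {1..m - j}" "y \<in> {1..m - j}" "e (x + j) (y + j)"
    then show "e (y + j) (x + j)" using noncrossing_equiv_sym[OF e] shift by blast
  next
    fix x y z assume "x \<in> {1..m - j}" "y \<in> {1..m - j}" "z \<in> {1..m - j}"
      "e (x + j) (y + j)" "e (y + j) (z + j)"
    then show "e (x + j) (z + j)" using noncrossing_equiv_trans[OF e] shift by blast
  next
    fix a b c d assume "1 \<le> a" "a < b" "b < c" "c < d" "d \<le> m - j"
      "e (a + j) (c + j)" "e (b + j) (d + j)"
    then show "e (a + j) (b + j)"
      using noncrossing_equiv_noncrossing[OF e, of "a + j" "b + j" "c + j" "d + j"] by simp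
  qed
qed

lemma noncrossing_equiv_separated:
  assumes e: "noncrossing_equiv m e" and root_last: "e (k + 1) m"
    and left_not_last: "\<forall>x\<in>{1..k}. \<not> e x m"
    and u: "u \<in> {1..k}" and v: "k < v" "v \<le> m"
  shows "\<not> e u v"
proof
  assume uv: "e u v"
  have ranges: "u \<in> {1..m}" "k + 1 \<in> {1..m}" "m \<in> {1..m}" using u v by auto
  have "e u m"
  proof (cases "v = m")
    case False
    \<comment> \<open>by noncrossing, \<open>u\<close> is joined to \<open>k + 1\<close>, which is joined to \<open>m\<close>\<close>
    have "e u (k + 1)"
    proof (cases "v = k + 1")
      case False
      then show ?thesis
        using noncrossing_equiv_noncrossing[OF e, of u "k + 1" v m] uv root_last u v \<open>v \<noteq> m\<close>
        by simp
    qed (use uv in simp)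
    then show ?thesis using noncrossing_equiv_trans[OF e] ranges root_last by blast
  qed (use uv in simp)
  then show False using left_not_last u by blast
qed

lemma arm_top_Node_root_eq_iff:
  assumes e: "noncrossing_equiv (tsize (Node s t)) e"
    and root_last: "e (tsize s + 1) (tsize (Node s t))"
    and t: "\<forall>x\<in>{1..tsize t}. \<forall>y\<in>{1..tsize t}.
              arm_top t x = arm_top t y \<longleftrightarrow> e (x + tsize s + 1) (y + tsize s + 1)"
    and v: "v \<in> {1..tsize t}"
  shows "arm_top (Node s t) (tsize s + 1) = arm_top (Node s t) (v + tsize s + 1)
    \<longleftrightarrow> e (tsize s + 1) (v + tsize s + 1)"
proof -
  let ?k = "tsize s" and ?m = "tsize (Node s t)"
  have last: "tsize t \<in> {1..tsize t}" "arm_top t (tsize t) = root_index t"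
    using v by (auto intro: arm_top_last)
  have "arm_top (Node s t) (?k + 1) = arm_top (Node s t) (v + ?k + 1) \<longleftrightarrow> arm_top t v = root_index t"
    using arm_top_Node_right_eq_root[OF v, of s] by auto
  also have "\<dots> \<longleftrightarrow> e (v + ?k + 1) (tsize t + ?k + 1)"
    using bspec[OF bspec[OF t v] last(1)] last(2) by simp
  also have "\<dots> \<longleftrightarrow> e (?k + 1) (v + ?k + 1)"
  proof -
    have r: "?k + 1 \<in> {1..?m}" "v + ?k + 1 \<in> {1..?m}" "?m \<in> {1..?m}" using v by auto
    have "e (v + ?k + 1) ?m \<longleftrightarrow> e (?k + 1) (v + ?k + 1)"
    proof
      assume "e (v + ?k + 1) ?m"
      then have "e ?m (v + ?k + 1)" by (rule noncrossing_equiv_sym[OF e r(2,3)])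
      with root_last show "e (?k + 1) (v + ?k + 1)" by (rule noncrossing_equiv_trans[OF e r(1,3,2)])
    next
      assume "e (?k + 1) (v + ?k + 1)"
      then have "e (v + ?k + 1) (?k + 1)" by (rule noncrossing_equiv_sym[OF e r(1,2)])
      from this root_last show "e (v + ?k + 1) ?m" by (rule noncrossing_equiv_trans[OF e r(2,1,3)])
    qed
    then show ?thesis by (simp add: add.commute add.left_commute)
  qed
  finally show ?thesis .
qed

lemma arm_top_Node_eq_iff_noncrossing_equiv:
  assumes e: "noncrossing_equiv (tsize (Node s t)) e"
    and root_last: "e (tsize s + 1) (tsize (Node s t))"
    and left_not_last: "\<forall>x\<in>{1..tsize s}. \<not> e x (tsize (Node s t))"
    and s: "\<forall>x\<in>{1..tsize s}. \<forall>y\<in>{1..tsize s}. arm_top s x = arm_top s y \<longleftrightarrow> e x y"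
    and t: "\<forall>x\<in>{1..tsize t}. \<forall>y\<in>{1..tsize t}.
              arm_top t x = arm_top t y \<longleftrightarrow> e (x + tsize s + 1) (y + tsize s + 1)"
    and x: "x \<in> {1..tsize (Node s t)}" and y: "y \<in> {1..tsize (Node s t)}"
  shows "arm_top (Node s t) x = arm_top (Node s t) y \<longleftrightarrow> e x y"
proof -
  let ?k = "tsize s" and ?top = "arm_top (Node s t)"
  have left_right: "?top u \<noteq> ?top v \<and> \<not> e u v \<and> \<not> e v u"
    if u: "u \<in> {1..?k}" and v: "v \<in> {1..tsize (Node s t)}" "?k < v" for u v
    using noncrossing_equiv_separated[OF e root_last left_not_last u v(2)]
      noncrossing_equiv_sym[OF e, of v u] arm_top_Node_left_less_right[OF u v(2), of t] u v
    by auto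
  from x show ?thesis
  proof (cases rule: Node_index_cases)
    case x_left: left
    from y show ?thesis
    proof (cases rule: Node_index_cases)
      case left
      then show ?thesis using x_left s by simp
    qed (use left_right[OF x_left y] in auto)
  next
    case x_root: root
    from y show ?thesis
    proof (cases rule: Node_index_cases)
      case left
      then show ?thesis using left_right[OF left x] x_root by auto
    next
      case (right y')
      then show ?thesis using arm_top_Node_root_eq_iff[OF e root_last t right(1)] x_root by simp
    qed (use x_root noncrossing_equiv_refl[OF e] in auto)
  next
    case x_right: (right x')
    from y show ?thesis
    proof (cases rule: Node_index_cases)
      case left
      then show ?thesis using left_right[OF left x] x_right by auto
    next
      case root
      then show ?thesis
        using arm_top_Node_root_eq_iff[OF e root_last t x_right(1)] x_right
          noncrossing_equiv_sym[OF e, of x "?k + 1"] noncrossing_equiv_sym[OF e, of "?k + 1" x]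
        by auto
    next
      case (right y')
      then show ?thesis
        using arm_top_Node_right_eq_iff[OF x_right(1) right(1)] t x_right by auto
    qed
  qed
qed

lemma exists_tree_with_arms:
  "noncrossing_equiv m e \<Longrightarrow>
    \<exists>tau. tsize tau = m \<and> (\<forall>x\<in>{1..m}. \<forall>y\<in>{1..m}. arm_top tau x = arm_top tau y \<longleftrightarrow> e x y)"
proof (induction m arbitrary: e rule: less_induct)
  case (less m)
  show ?case
  proof (cases "m = 0")
    case True
    then show ?thesis by (intro exI[of _ Leaf]) simp
  next
    case False
    then have m: "1 \<le> m \<and> e m m"
      using noncrossing_equiv_refl[OF less.prems, of m] by simp
    \<comment> \<open>the least element of the block of \<open>m\<close> becomes the root\<close>
    define j where "j = (LEAST x. 1 \<le> x \<and> e x m)"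
    have j: "1 \<le> j" "e j m" "j \<le> m"
      using LeastI[of "\<lambda>x. 1 \<le> x \<and> e x m" m, OF m] Least_le[of "\<lambda>x. 1 \<le> x \<and> e x m" m, OF m]
      unfolding j_def by simp_all
    have j_least: "\<forall>x\<in>{1..j - 1}. \<not> e x m"
    proof
      fix x assume "x \<in> {1..j - 1}"
      then have "1 \<le> x" "x < j" by auto
      then show "\<not> e x m" using not_less_Least[of x "\<lambda>x. 1 \<le> x \<and> e x m"] unfolding j_def by blast
    qed
    have "j - 1 < m" "m - j < m" using j by simp_all
    obtain s where s: "tsize s = j - 1"
      "\<forall>x\<in>{1..j - 1}. \<forall>y\<in>{1..j - 1}. arm_top s x = arm_top s y \<longleftrightarrow> e x y"
      using less.IH[OF \<open>j - 1 < m\<close> noncrossing_equiv_mono[OF less.prems]] j(3) by fastforce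
    obtain t where t: "tsize t = m - j"
      "\<forall>x\<in>{1..m - j}. \<forall>y\<in>{1..m - j}. arm_top t x = arm_top t y \<longleftrightarrow> e (x + j) (y + j)"
      using less.IH[OF \<open>m - j < m\<close> noncrossing_equiv_shift[OF less.prems]] by blast
    have j_eq: "j = tsize s + 1" and m_eq: "m = tsize (Node s t)"
      using s(1) t(1) j by simp_all
    have "\<forall>x\<in>{1..m}. \<forall>y\<in>{1..m}. arm_top (Node s t) x = arm_top (Node s t) y \<longleftrightarrow> e x y"
    proof (intro ballI)
      fix x y assume "x \<in> {1..m}" "y \<in> {1..m}"
      with less.prems j(2) j_least s(2) t(2) show "arm_top (Node s t) x = arm_top (Node s t) y \<longleftrightarrow> e x y"
        unfolding s(1)[symmetric] t(1)[symmetric] unfolding j_eq m_eq add.assoc[symmetric]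
        by (rule arm_top_Node_eq_iff_noncrossing_equiv)
    qed
    then show ?thesis using m_eq by blast
  qed
qed

lemma noncrossing_equiv_same_block:
  assumes "P \<in> NCP m"
  shows "noncrossing_equiv m (\<lambda>x y. \<exists>B\<in>P. x \<in> B \<and> y \<in> B)"
proof -
  have P: "partition_on {1..m} P" and nc: "noncrossing P"
    using assms unfolding NCP_def by auto
  have same: "B1 = B2" if "B1 \<in> P" "B2 \<in> P" "x \<in> B1" "x \<in> B2" for B1 B2 x
    using disjointD[OF partition_onD2[OF P] that(1,2)] that(3,4) by blast
  show ?thesis
    unfolding noncrossing_equiv_def
  proof (intro conjI ballI allI impI)
    fix x assume "x \<in> {1..m}"
    then show "\<exists>B\<in>P. x \<in> B \<and> x \<in> B" using partition_onD1[OF P] by blast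
  next
    fix x y assume "\<exists>B\<in>P. x \<in> B \<and> y \<in> B"
    then show "\<exists>B\<in>P. y \<in> B \<and> x \<in> B" by blast
  next
    fix x y z assume "\<exists>B\<in>P. x \<in> B \<and> y \<in> B" "\<exists>B\<in>P. y \<in> B \<and> z \<in> B"
    then show "\<exists>B\<in>P. x \<in> B \<and> z \<in> B" using same by metis
  next
    fix a b c d assume order: "a < b" "b < c" "c < d"
      and "\<exists>B\<in>P. a \<in> B \<and> c \<in> B" "\<exists>B\<in>P. b \<in> B \<and> d \<in> B"
    then obtain B1 B2 where B: "B1 \<in> P" "a \<in> B1" "c \<in> B1" "B2 \<in> P" "b \<in> B2" "d \<in> B2"
      by blast
    have "B1 = B2"
      using nc B order unfolding noncrossing_def by blast
    then show "\<exists>B\<in>P. a \<in> B \<and> b \<in> B" using B by blast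
  qed
qed

lemma phi_surj_NCP:
  assumes "P \<in> NCP m"
  obtains tau where "tsize tau = m" "phi tau = P"
proof -
  have P: "partition_on {1..m} P"
    using assms unfolding NCP_def by auto
  obtain tau where tau: "tsize tau = m"
    "\<forall>x\<in>{1..m}. \<forall>y\<in>{1..m}. arm_top tau x = arm_top tau y \<longleftrightarrow> (\<exists>B\<in>P. x \<in> B \<and> y \<in> B)"
    using exists_tree_with_arms[OF noncrossing_equiv_same_block[OF assms]] by blast
  have "{(x, y). \<exists>B\<in>P. x \<in> B \<and> y \<in> B} \<subseteq> {1..m} \<times> {1..m}"
    using partition_onD1[OF P] by blast
  then have "same_arm tau = {(x, y). \<exists>B\<in>P. x \<in> B \<and> y \<in> B}"
    using tau unfolding same_arm_def by blast
  then have "phi tau = P"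
    unfolding phi_def right_arms_eq_quotient tau(1) using partition_on_eq_quotient[OF P] by simp
  with tau(1) show thesis by (rule that)
qed

definition parity_uniform :: "nat set set \<Rightarrow> bool" where
  "parity_uniform P \<longleftrightarrow> (\<forall>B\<in>P. \<forall>x\<in>B. \<forall>y\<in>B. even x = even y)"

lemma splits_iff_parity_uniform: "splits tau \<longleftrightarrow> parity_uniform (phi tau)"
  unfolding splits_def parity_uniform_def phi_def ..

lemma partition_on_vimage_closed:
  assumes part: "partition_on A P" and inj: "inj g" and range: "g ` I \<subseteq> A"
    and closed: "\<And>B. B \<in> P \<Longrightarrow> B \<inter> g ` I \<noteq> {} \<Longrightarrow> B \<subseteq> g ` I"
  shows "partition_on I ((\<lambda>B. g -` B) ` {B \<in> P. B \<subseteq> g ` I})"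
proof -
  let ?S = "{B \<in> P. B \<subseteq> g ` I}"
  show ?thesis
  proof (rule partition_onI)
    show "\<Union> ((\<lambda>B. g -` B) ` ?S) = I"
    proof (intro equalityI subsetI)
      fix i assume "i \<in> \<Union> ((\<lambda>B. g -` B) ` ?S)"
      then obtain j where "j \<in> I" "g i = g j" by blast
      then show "i \<in> I" using injD[OF inj] by metis
    next
      fix i assume i: "i \<in> I"
      then have "g i \<in> A" using range by blast
      then have "g i \<in> \<Union>P" unfolding partition_onD1[OF part, symmetric] .
      then obtain B where B: "B \<in> P" "g i \<in> B" by blast
      then have "B \<subseteq> g ` I" using closed i by blast
      with B show "i \<in> \<Union> ((\<lambda>B. g -` B) ` ?S)" by blast
    qed
  next
    fix p q assume "p \<in> (\<lambda>B. g -` B) ` ?S" "q \<in> (\<lambda>B. g -` B) ` ?S" "p \<noteq> q"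
    then obtain B1 B2 where B: "B1 \<in> P" "B2 \<in> P" "p = g -` B1" "q = g -` B2"
      by blast
    then have "B1 \<noteq> B2" using \<open>p \<noteq> q\<close> by blast
    then have "B1 \<inter> B2 = {}" using disjointD[OF partition_onD2[OF part] B(1,2)] by blast
    then show "disjnt p q" using B(3,4) by (auto simp: disjnt_def)
  next
    have "g -` B \<noteq> {}" if B: "B \<in> ?S" for B
    proof -
      obtain x where "x \<in> B" using partition_onD3[OF part] B by fastforce
      then show ?thesis using B by blast
    qed
    then show "{} \<notin> (\<lambda>B. g -` B) ` ?S" by blast
  qed
qed

lemma noncrossing_vimage_strict_mono:
  fixes g :: "nat \<Rightarrow> nat"
  assumes nc: "noncrossing P" and g: "strict_mono g"
  shows "noncrossing ((\<lambda>B. g -` B) ` P)"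
  unfolding noncrossing_def
proof (intro ballI allI impI)
  fix V1 V2 a b c d
  assume "V1 \<in> (\<lambda>B. g -` B) ` P" "V2 \<in> (\<lambda>B. g -` B) ` P" "V1 \<noteq> V2"
    and order: "a < b" "b < c" "c < d" and mem: "a \<in> V1" "c \<in> V1" "b \<in> V2" "d \<in> V2"
  then obtain B1 B2 where B: "B1 \<in> P" "B2 \<in> P" "V1 = g -` B1" "V2 = g -` B2"
    by blast
  with \<open>V1 \<noteq> V2\<close> have "B1 \<noteq> B2" by blast
  have "g a < g b" "g b < g c" "g c < g d"
    using order g by (simp_all add: strict_mono_less)
  moreover have "g a \<in> B1" "g c \<in> B1" "g b \<in> B2" "g d \<in> B2" using mem B by simp_all
  ultimately show False
    using noncrossing_def[THEN iffD1, OF nc, rule_format, OF B(1,2) \<open>B1 \<noteq> B2\<close>] by blast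
qed

lemma noncrossing_subset:
  assumes "noncrossing P" "Q \<subseteq> P"
  shows "noncrossing Q"
  unfolding noncrossing_def
proof (intro ballI allI impI)
  fix B1 B2 a b c d
  assume "B1 \<in> Q" "B2 \<in> Q" "B1 \<noteq> B2" "a < b" "b < c" "c < d"
    "a \<in> B1" "c \<in> B1" "b \<in> B2" "d \<in> B2"
  moreover have "B1 \<in> P" "B2 \<in> P" using \<open>B1 \<in> Q\<close> \<open>B2 \<in> Q\<close> assms(2) by blast+
  ultimately show False
    using noncrossing_def[THEN iffD1, OF assms(1), rule_format, of B1 B2 a b c d] by blast
qed

lemma NCP_vimage_strict_mono:
  fixes g :: "nat \<Rightarrow> nat"
  assumes P: "P \<in> NCP N" and g: "strict_mono g" "g ` {1..n} \<subseteq> {1..N}"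
    and closed: "\<And>B. B \<in> P \<Longrightarrow> B \<inter> g ` {1..n} \<noteq> {} \<Longrightarrow> B \<subseteq> g ` {1..n}"
  shows "(\<lambda>B. g -` B) ` {B \<in> P. B \<subseteq> g ` {1..n}} \<in> NCP n"
proof -
  have part: "partition_on {1..N} P" and nc: "noncrossing P"
    using P unfolding NCP_def by auto
  have "noncrossing {B \<in> P. B \<subseteq> g ` {1..n}}"
    by (rule noncrossing_subset[OF nc]) blast
  then have "noncrossing ((\<lambda>B. g -` B) ` {B \<in> P. B \<subseteq> g ` {1..n}})"
    using g(1) by (rule noncrossing_vimage_strict_mono)
  moreover have "partition_on {1..n} ((\<lambda>B. g -` B) ` {B \<in> P. B \<subseteq> g ` {1..n}})"
    using part strict_mono_imp_inj_on[OF g(1)] g(2) closed by (rule partition_on_vimage_closed)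
  ultimately show ?thesis unfolding NCP_def by simp
qed

lemma image_double_minus_one: "(\<lambda>i. 2 * i - 1) ` {1..n} = {x \<in> {1..2 * n}. odd (x :: nat)}"
proof (intro equalityI subsetI)
  fix x assume "x \<in> {x \<in> {1..2 * n}. odd x}"
  then have "x = 2 * ((x + 1) div 2) - 1" "(x + 1) div 2 \<in> {1..n}" by (auto elim!: oddE)
  then show "x \<in> (\<lambda>i. 2 * i - 1) ` {1..n}" by blast
qed auto

lemma image_double: "(\<lambda>i. 2 * i) ` {1..n} = {x \<in> {1..2 * n}. even (x :: nat)}"
proof (intro equalityI subsetI)
  fix x assume "x \<in> {x \<in> {1..2 * n}. even x}"
  then have "x = 2 * (x div 2)" "x div 2 \<in> {1..n}" by (auto elim!: evenE)
  then show "x \<in> (\<lambda>i. 2 * i) ` {1..n}" by blast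
qed auto

lemma parity_uniform_ncp_union:
  assumes "Q1 \<in> NCP n" "Q2 \<in> NCP n"
  shows "parity_uniform (ncp_union Q1 Q2)"
  unfolding parity_uniform_def
proof (intro ballI)
  fix B x y assume B: "B \<in> ncp_union Q1 Q2" and xy: "x \<in> B" "y \<in> B"
  have sub: "V \<subseteq> {1..n}" if "V \<in> Q1 \<or> V \<in> Q2" for V
    using assms that partition_onD1 unfolding NCP_def by blast
  from B consider (odd) V where "V \<in> Q1" "B = (\<lambda>i. 2 * i - 1) ` V"
    | (even) W where "W \<in> Q2" "B = (\<lambda>i. 2 * i) ` W"
    unfolding ncp_union_def by blast
  then show "even x = even y"
  proof cases
    case odd
    then have "odd z" if "z \<in> B" for z
      using that sub[of V] by (auto simp: Suc_le_eq)
    then show ?thesis using xy by blast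
  next
    case even
    then show ?thesis using xy by auto
  qed
qed

lemma parity_uniform_block_cases:
  assumes "P \<in> NCP (2 * n)" "parity_uniform P" "B \<in> P"
  obtains (odd) "B \<subseteq> {x \<in> {1..2 * n}. odd x}" | (even) "B \<subseteq> {x \<in> {1..2 * n}. even x}"
proof -
  have range: "B \<subseteq> {1..2 * n}"
    using assms(1,3) partition_onD1 unfolding NCP_def by blast
  have same: "even x = even y" if "x \<in> B" "y \<in> B" for x y
    using assms(2,3) that unfolding parity_uniform_def by blast
  show thesis
  proof (cases "\<exists>x\<in>B. odd x")
    case True
    then obtain x where "x \<in> B" "odd x" by blast
    then show thesis using odd range same by blast
  next
    case False
    then show thesis using even range by blast
  qed
qed

lemma ncp_union_of_parity_uniform:
  assumes P: "P \<in> NCP (2 * n)" and uniform: "parity_uniform P"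
  shows "\<exists>Q1\<in>NCP n. \<exists>Q2\<in>NCP n. P = ncp_union Q1 Q2"
proof -
  let ?odd = "\<lambda>i::nat. 2 * i - 1" and ?even = "\<lambda>i::nat. 2 * i"
  let ?Po = "{B \<in> P. B \<subseteq> ?odd ` {1..n}}" and ?Pe = "{B \<in> P. B \<subseteq> ?even ` {1..n}}"
  have Q1: "(\<lambda>B. ?odd -` B) ` ?Po \<in> NCP n"
  proof (rule NCP_vimage_strict_mono[OF P])
    show "strict_mono ?odd" by (rule strict_monoI) auto
    show "?odd ` {1..n} \<subseteq> {1..2 * n}" unfolding image_double_minus_one by blast
    show "B \<subseteq> ?odd ` {1..n}" if "B \<in> P" "B \<inter> ?odd ` {1..n} \<noteq> {}" for B
      using parity_uniform_block_cases[OF P uniform that(1)] that(2)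
      unfolding image_double_minus_one by auto
  qed
  have Q2: "(\<lambda>B. ?even -` B) ` ?Pe \<in> NCP n"
  proof (rule NCP_vimage_strict_mono[OF P])
    show "strict_mono ?even" by (rule strict_monoI) auto
    show "?even ` {1..n} \<subseteq> {1..2 * n}" unfolding image_double by blast
    show "B \<subseteq> ?even ` {1..n}" if "B \<in> P" "B \<inter> ?even ` {1..n} \<noteq> {}" for B
      using parity_uniform_block_cases[OF P uniform that(1)] that(2)
      unfolding image_double by auto
  qed
  have "?odd ` (?odd -` B) = B" if "B \<in> ?Po" for B
    using that by (auto simp: image_vimage_eq)
  then have "(\<lambda>B. ?odd ` (?odd -` B)) ` ?Po = ?Po"
    using image_cong[of ?Po ?Po "\<lambda>B. ?odd ` (?odd -` B)" id] by simp
  moreover have "?even ` (?even -` B) = B" if "B \<in> ?Pe" for B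
    using that by (auto simp: image_vimage_eq)
  then have "(\<lambda>B. ?even ` (?even -` B)) ` ?Pe = ?Pe"
    using image_cong[of ?Pe ?Pe "\<lambda>B. ?even ` (?even -` B)" id] by simp
  ultimately have "ncp_union ((\<lambda>B. ?odd -` B) ` ?Po) ((\<lambda>B. ?even -` B) ` ?Pe) = ?Po \<union> ?Pe"
    unfolding ncp_union_def image_image by simp
  also have "\<dots> = P"
  proof (intro equalityI subsetI)
    fix B assume B: "B \<in> P"
    from parity_uniform_block_cases[OF P uniform B] show "B \<in> ?Po \<union> ?Pe"
      unfolding image_double_minus_one image_double using B by cases blast+
  qed blast
  finally show ?thesis using Q1 Q2 by blast
qed

lemma NCP_parity_uniform_iff_ncp_union:
  "P \<in> NCP (2 * n) \<Longrightarrow> parity_uniform P \<longleftrightarrow> (\<exists>Q1\<in>NCP n. \<exists>Q2\<in>NCP n. P = ncp_union Q1 Q2)"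
  using ncp_union_of_parity_uniform parity_uniform_ncp_union by blast

lemma phi_Ybe_eq_parity_uniform_NCP:
  assumes "even m"
  shows "phi ` {tau. Ybe tau \<and> tsize tau = m} = {P \<in> NCP m. parity_uniform P}"
proof (intro equalityI subsetI)
  fix P assume "P \<in> phi ` {tau. Ybe tau \<and> tsize tau = m}"
  then obtain tau where "Ybe tau" "tsize tau = m" "P = phi tau" by blast
  then show "P \<in> {P \<in> NCP m. parity_uniform P}"
    using phi_in_NCP[of tau] by (simp add: Ybe_iff_splits_even splits_iff_parity_uniform)
next
  fix P assume "P \<in> {P \<in> NCP m. parity_uniform P}"
  then have P: "P \<in> NCP m" and uniform: "parity_uniform P" by simp_all
  obtain tau where tau: "tsize tau = m" "phi tau = P" using phi_surj_NCP[OF P] .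
  have "Ybe tau"
    using tau uniform assms by (simp add: Ybe_iff_splits_even splits_iff_parity_uniform)
  with tau show "P \<in> phi ` {tau. Ybe tau \<and> tsize tau = m}" by blast
qed

theorem lemma4:
  shows "(\<forall>tau. splits tau \<longleftrightarrow> (Ybe tau \<or> Ybo tau))
       \<and> (\<forall>n::nat. phi ` {tau. Ybe tau \<and> tsize tau = 2*n}
              = {P \<in> NCP (2*n). \<exists>Q1 \<in> NCP n. \<exists>Q2 \<in> NCP n. P = ncp_union Q1 Q2})"
proof (intro conjI allI)
  fix tau
  show "splits tau \<longleftrightarrow> Ybe tau \<or> Ybo tau" by (rule splits_iff_Ybe_or_Ybo)
next
  fix n :: nat
  have "phi ` {tau. Ybe tau \<and> tsize tau = 2 * n} = {P \<in> NCP (2 * n). parity_uniform P}"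
    by (rule phi_Ybe_eq_parity_uniform_NCP) simp
  also have "\<dots> = {P \<in> NCP (2 * n). \<exists>Q1 \<in> NCP n. \<exists>Q2 \<in> NCP n. P = ncp_union Q1 Q2}"
    using NCP_parity_uniform_iff_ncp_union by blast
  finally show "phi ` {tau. Ybe tau \<and> tsize tau = 2*n}
      = {P \<in> NCP (2*n). \<exists>Q1 \<in> NCP n. \<exists>Q2 \<in> NCP n. P = ncp_union Q1 Q2}" .
qed

end
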